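(* There exists a fragile graph with minimum degree $4$, and there exists a fragile graph with chromatic number $4$.
   Context: All graphs are finite and simple. A graph is $k$-connected if it has at least $k+1$ vertices and no vertex cutset with at most $k-1$ vertices. A graph is fragile if it has no $3$-connected subgraph. *)

theory Defs
  imports Main
begin

definition graph :: "'a set \<Rightarrow> 'a set set \<Rightarrow> bool" where
  "graph V E \<longleftrightarrow> finite V \<and> (\<forall>e\<in>E. \<exists>u v. e = {u, v} \<and> u \<noteq> v \<and> u \<in> V \<and> v \<in> V)"

definition subgraph :: "'a set \<Rightarrow> 'a set set \<Rightarrow> 'a set \<Rightarrow> 'a set set \<Rightarrow> bool" where
  "subgraph V' E' V E \<longleftrightarrow> graph V' E' \<and> V' \<subseteq> V \<and> E' \<subseteq> E"

definition adj :: "'a set set \<Rightarrow> 'a \<Rightarrow> 'a \<Rightarrow> bool" where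
  "adj E u v \<longleftrightarrow> {u, v} \<in> E"

definition connected :: "'a set \<Rightarrow> 'a set set \<Rightarrow> bool" where
  "connected V E \<longleftrightarrow> V \<noteq> {} \<and> (\<forall>u\<in>V. \<forall>v\<in>V. (adj E)\<^sup>*\<^sup>* u v)"

definition del_verts_E :: "'a set set \<Rightarrow> 'a set \<Rightarrow> 'a set set" where
  "del_verts_E E S = {e \<in> E. e \<inter> S = {}}"

definition vertex_cutset :: "'a set \<Rightarrow> 'a set set \<Rightarrow> 'a set \<Rightarrow> bool" where
  "vertex_cutset V E S \<longleftrightarrow> S \<subseteq> V \<and> \<not> connected (V - S) (del_verts_E E S)"

definition k_connected :: "nat \<Rightarrow> 'a set \<Rightarrow> 'a set set \<Rightarrow> bool" where
  "k_connected k V E \<longleftrightarrow> card V \<ge> k + 1 \<and> \<not> (\<exists>S. vertex_cutset V E S \<and> card S < k)"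

definition fragile :: "'a set \<Rightarrow> 'a set set \<Rightarrow> bool" where
  "fragile V E \<longleftrightarrow> \<not> (\<exists>V' E'. subgraph V' E' V E \<and> k_connected 3 V' E')"

definition degree :: "'a set set \<Rightarrow> 'a \<Rightarrow> nat" where
  "degree E v = card {e \<in> E. v \<in> e}"

definition min_degree :: "'a set \<Rightarrow> 'a set set \<Rightarrow> nat" where
  "min_degree V E = Min (degree E ` V)"

definition proper_colouring :: "'a set \<Rightarrow> 'a set set \<Rightarrow> nat \<Rightarrow> ('a \<Rightarrow> nat) \<Rightarrow> bool" where
  "proper_colouring V E k c \<longleftrightarrow> (\<forall>v\<in>V. c v < k) \<and> (\<forall>u v. {u, v} \<in> E \<longrightarrow> c u \<noteq> c v)"

definition chromatic_number :: "'a set \<Rightarrow> 'a set set \<Rightarrow> nat" where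
  "chromatic_number V E = (LEAST k. \<exists>c. proper_colouring V E k c)"

end

theory Submission
  imports Defs
begin

(* Fragility survives gluing along at most two vertices: a 3-connected subgraph meeting both
   sides strictly would be separated by the at most two shared vertices.  Graphs on at most
   three vertices are trivially fragile, so every graph assembled from triangles and edges by
   such gluings is fragile.  A 4-regular example is obtained by gluing two copies of one
   7-vertex gadget along two vertices; the Moser spindle arises in the same way and has
   chromatic number 4. *)

definition induced_edges :: "'a set set \<Rightarrow> 'a set \<Rightarrow> 'a set set" where
  "induced_edges E A = {e \<in> E. e \<subseteq> A}"

lemma graph_empty: "finite V \<Longrightarrow> graph V {}"
  by (simp add: graph_def)

lemma graph_insert:
  "graph V E \<Longrightarrow> u \<noteq> v \<Longrightarrow> u \<in> V \<Longrightarrow> v \<in> V \<Longrightarrow> graph V (insert {u, v} E)"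
  unfolding graph_def by (simp (no_asm_use)) blast

lemma graph_edge_subset: "graph V E \<Longrightarrow> e \<in> E \<Longrightarrow> e \<subseteq> V"
  unfolding graph_def by force

lemma induced_edges_self: "graph V E \<Longrightarrow> induced_edges E V = E"
  unfolding induced_edges_def using graph_edge_subset by blast

lemma fragile_card_le_3:
  assumes "finite V" "card V \<le> 3" shows "fragile V E"
  unfolding fragile_def
proof
  assume "\<exists>V' E'. subgraph V' E' V E \<and> k_connected 3 V' E'"
  then obtain V' E' where sub: "subgraph V' E' V E" and conn: "k_connected 3 V' E'" by blast
  have "V' \<subseteq> V" using sub by (simp add: subgraph_def)
  then have "card V' \<le> 3" using assms card_mono order_trans by metis
  then show False using conn by (simp add: k_connected_def)
qed

lemma rtranclp_adj_closed:
  assumes "(adj F)\<^sup>*\<^sup>* x z" "x \<in> C" "\<forall>e\<in>F. e \<inter> C \<noteq> {} \<longrightarrow> e \<subseteq> C"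
  shows "z \<in> C"
  using assms(1)
proof (induction rule: rtranclp_induct)
  case base
  show ?case using assms(2) .
next
  case (step y z)
  have "{y, z} \<in> F" using step.hyps(2) by (simp add: adj_def)
  moreover have "{y, z} \<inter> C \<noteq> {}" using step.IH by blast
  ultimately have "{y, z} \<subseteq> C" by (rule assms(3)[rule_format])
  then show ?case by simp
qed

lemma subgraph_induced_edges:
  assumes "graph V' E'" "V' \<subseteq> A" "E' \<subseteq> E"
  shows "subgraph V' E' A (induced_edges E A)"
  using assms graph_edge_subset unfolding subgraph_def induced_edges_def by blast

lemma fragile_Un:
  assumes fin: "finite (A \<inter> B)" and sep: "card (A \<inter> B) \<le> 2"
    and no_cross: "\<forall>e\<in>E. e \<subseteq> A \<union> B \<longrightarrow> e \<subseteq> A \<or> e \<subseteq> B"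
    and frA: "fragile A (induced_edges E A)" and frB: "fragile B (induced_edges E B)"
  shows "fragile (A \<union> B) (induced_edges E (A \<union> B))"
  unfolding fragile_def
proof
  assume "\<exists>V' E'. subgraph V' E' (A \<union> B) (induced_edges E (A \<union> B)) \<and> k_connected 3 V' E'"
  then obtain V' E' where sub: "subgraph V' E' (A \<union> B) (induced_edges E (A \<union> B))"
    and conn: "k_connected 3 V' E'" by blast
  have g: "graph V' E'" and V': "V' \<subseteq> A \<union> B" and E': "E' \<subseteq> E"
    and E'_Un: "\<forall>e\<in>E'. e \<subseteq> A \<union> B"
    using sub unfolding subgraph_def induced_edges_def by auto
  obtain x where x: "x \<in> V'" "x \<in> B - A"
    using subgraph_induced_edges[OF g _ E'] frA conn V' unfolding fragile_def by blast
  obtain y where y: "y \<in> V'" "y \<notin> B"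
    using subgraph_induced_edges[OF g _ E'] frB conn unfolding fragile_def by blast
  define S where "S = V' \<inter> A \<inter> B"
  have "card S \<le> card (A \<inter> B)"
    unfolding S_def using fin by (intro card_mono) auto
  then have card_S: "card S < 3" using sep by simp
  \<comment> \<open>after deleting S, an edge meeting B - A cannot leave it, since its ends in A lie in S\<close>
  have "\<forall>e\<in>del_verts_E E' S. e \<inter> (B - A) \<noteq> {} \<longrightarrow> e \<subseteq> B - A"
  proof (intro ballI impI)
    fix e assume e: "e \<in> del_verts_E E' S" "e \<inter> (B - A) \<noteq> {}"
    then have "e \<in> E'" "e \<inter> S = {}" by (auto simp: del_verts_E_def)
    moreover have "e \<subseteq> V'" using graph_edge_subset[OF g \<open>e \<in> E'\<close>] .
    moreover have "e \<subseteq> B" using no_cross E' E'_Un \<open>e \<in> E'\<close> e(2) by blast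
    ultimately show "e \<subseteq> B - A" unfolding S_def by blast
  qed
  then have "\<not> (adj (del_verts_E E' S))\<^sup>*\<^sup>* x y"
    using rtranclp_adj_closed[where C = "B - A"] x(2) y(2) by blast
  then have "vertex_cutset V' E' S"
    using x y unfolding vertex_cutset_def connected_def S_def by blast
  then show False using conn card_S unfolding k_connected_def by blast
qed

lemma min_degree_eqI:
  assumes "V \<noteq> {}" "\<forall>v\<in>V. degree E v = k"
  shows "min_degree V E = k"
proof -
  have "degree E ` V = {k}" using assms by auto
  then show ?thesis by (simp add: min_degree_def)
qed

lemma chromatic_number_eqI:
  assumes "proper_colouring V E k c" "\<And>k' c'. proper_colouring V E k' c' \<Longrightarrow> k \<le> k'"
  shows "chromatic_number V E = k"
  unfolding chromatic_number_def by (rule Least_equality) (use assms in blast)+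

definition quartic_V :: "nat set" where
  "quartic_V = {0,1,2,3,4,5,6,7,8,9,10,11,12,13}"

definition quartic_E :: "nat set set" where
  "quartic_E = {{0,2},{0,3},{0,4},{0,5},{1,2},{1,3},{1,4},{1,5},{2,3},{4,5},{2,6},{3,6},{4,7},{5,7},
    {8,10},{8,11},{8,12},{8,13},{9,10},{9,11},{9,12},{9,13},{10,11},{12,13},{6,10},{6,11},{7,12},{7,13}}"

lemma quartic_graph: "graph quartic_V quartic_E"
  unfolding quartic_V_def quartic_E_def by (intro graph_insert graph_empty) simp_all

lemma quartic_fragile: "fragile quartic_V quartic_E"
proof -
  \<comment> \<open>the bracketing of ?T is the gluing tree: every union shares at most two vertices\<close>
  let ?T = "(((({0,2,3} \<union> {1,2,3}) \<union> ({0,4,5} \<union> {1,4,5})) \<union> {4,5,7}) \<union> {2,3,6})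
    \<union> (((({8,10,11} \<union> {9,10,11}) \<union> ({8,12,13} \<union> {9,12,13})) \<union> {7,12,13}) \<union> {6,10,11})"
  have "fragile ?T (induced_edges quartic_E ?T)"
    by (intro fragile_Un fragile_card_le_3) (simp_all add: quartic_E_def)
  moreover have "?T = quartic_V"
    unfolding quartic_V_def by auto
  ultimately show ?thesis
    using induced_edges_self[OF quartic_graph] by simp
qed

lemma degree_empty: "degree {} v = 0"
  by (simp add: degree_def)

lemma degree_insert:
  assumes "finite E" "e \<notin> E"
  shows "degree (insert e E) v = (if v \<in> e then Suc (degree E v) else degree E v)"
proof -
  have "{e' \<in> insert e E. v \<in> e'} = (if v \<in> e then insert e {e' \<in> E. v \<in> e'} else {e' \<in> E. v \<in> e'})"
    by auto
  then show ?thesis using assms by (simp add: degree_def)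
qed

lemma quartic_degree: "\<forall>v\<in>quartic_V. degree quartic_E v = 4"
  unfolding quartic_V_def quartic_E_def
  by (simp add: degree_insert degree_empty doubleton_eq_iff)

lemma quartic_min_degree: "min_degree quartic_V quartic_E = 4"
  using quartic_degree by (intro min_degree_eqI) (simp add: quartic_V_def)

definition moser_V :: "nat set" where
  "moser_V = {0,1,2,3,4,5,6}"

definition moser_E :: "nat set set" where
  "moser_E = {{0,2},{0,3},{2,3},{1,2},{1,3},{0,4},{0,5},{4,5},{4,6},{5,6},{1,6}}"

lemma moser_graph: "graph moser_V moser_E"
  unfolding moser_V_def moser_E_def by (intro graph_insert graph_empty) simp_all

lemma moser_fragile: "fragile moser_V moser_E"
proof -
  let ?T = "({0,2,3} \<union> {1,2,3}) \<union> (({0,4,5} \<union> {4,5,6}) \<union> {1,6})"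
  have "fragile ?T (induced_edges moser_E ?T)"
    by (intro fragile_Un fragile_card_le_3) (simp_all add: moser_E_def)
  moreover have "?T = moser_V"
    unfolding moser_V_def by auto
  ultimately show ?thesis
    using induced_edges_self[OF moser_graph] by simp
qed

lemma moser_colouring:
  "proper_colouring moser_V moser_E 4
     (\<lambda>v. if v \<in> {2,4} then 1 else if v \<in> {3,5} then 2 else if v = 6 then 3 else 0)"
  unfolding proper_colouring_def moser_V_def moser_E_def by (auto simp: doubleton_eq_iff)

lemma three_colours_pigeonhole:
  fixes a b x y :: nat
  assumes "a < 3" "b < 3" "x < 3" "y < 3" "a \<noteq> b" "x \<noteq> a" "x \<noteq> b" "y \<noteq> a" "y \<noteq> b"
  shows "x = y"
  using assms by arith

lemma moser_not_3_colourable: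
  assumes "proper_colouring moser_V moser_E k c"
  shows "4 \<le> k"
proof (rule ccontr)
  assume "\<not> 4 \<le> k"
  then have "\<forall>v\<in>moser_V. c v < 3"
    using assms unfolding proper_colouring_def by fastforce
  then have colours: "c 0 < 3" "c 1 < 3" "c 2 < 3" "c 3 < 3" "c 4 < 3" "c 5 < 3" "c 6 < 3"
    by (simp_all add: moser_V_def)
  have edge: "c u \<noteq> c v" if "{u, v} \<in> moser_E" for u v
    using assms that unfolding proper_colouring_def by blast
  then have "c 0 \<noteq> c 2" "c 0 \<noteq> c 3" "c 2 \<noteq> c 3" "c 1 \<noteq> c 2" "c 1 \<noteq> c 3"
    "c 0 \<noteq> c 4" "c 0 \<noteq> c 5" "c 4 \<noteq> c 5" "c 4 \<noteq> c 6" "c 5 \<noteq> c 6"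
    by (simp_all add: moser_E_def)
  \<comment> \<open>each of the two diamonds forces its tips to share a colour\<close>
  then have "c 1 = c 0" "c 6 = c 0"
    using three_colours_pigeonhole colours by metis+
  moreover have "c 1 \<noteq> c 6"
    using edge by (simp add: moser_E_def)
  ultimately show False by simp
qed

lemma moser_chromatic_number: "chromatic_number moser_V moser_E = 4"
  using moser_colouring moser_not_3_colourable by (rule chromatic_number_eqI)

theorem mainTheorem4:
  shows "(\<exists>(V::nat set) E. graph V E \<and> V \<noteq> {} \<and> fragile V E \<and> min_degree V E = 4) \<and>
         (\<exists>(V::nat set) E. graph V E \<and> fragile V E \<and> chromatic_number V E = 4)"
proof
  show "\<exists>(V::nat set) E. graph V E \<and> V \<noteq> {} \<and> fragile V E \<and> min_degree V E = 4"
    using quartic_graph quartic_fragile quartic_min_degree by (auto simp: quartic_V_def)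
  show "\<exists>(V::nat set) E. graph V E \<and> fragile V E \<and> chromatic_number V E = 4"
    using moser_graph moser_fragile moser_chromatic_number by blast
qed

end
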